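(* In one-to-one matching games with additive externalities, the optimistic pairwise stable set of a game coincides with its weak optimistic stable set.
   Context: Agents: $N=M\cup W$ with $M,W$ disjoint finite sets. A match is a pair $(m,w)$ with $m\in M$, $w\in W$; a one-to-one matching is a set of matches in which every agent appears in at most one match. Forming a match requires consent of both endpoints; severing can be done unilaterally. A game is $G=(M,W,\Pi)$ where $\Pi(m,w\mid z)\in\mathbb{R}$ is the value agent $z$ receives from the formation of match $(m,w)$; utility is $u(z,\mathcal{A})=\sum_{(m,w)\in\mathcal{A}}\Pi(m,w\mid z)$. A coalition $B\subseteq N$ deviates from $\mathcal{A}$ by rearranging matches among its members and deleting matches of its members with agents outside $B$ (keeping the result one-to-one), with every member performing at least one action (severing a match or forming a new match with another member of $B$). Under optimistic reasoning each member $i\in B$ evaluates the deviation assuming the agents in $N\setminus B$ organize themselves in the best possible way for $i$. The weak optimistic stable set is the set of one-to-one matchings for which no coalition has a deviation under which all its members strictly improve (under optimistic reasoning). The optimistic pairwise stable set is the set of one-to-one matchings with no blocking coalition of size one or two under optimistic reasoning (a single agent cutting its match; or two agents forming a new match with each other while possibly cutting previous matches, or coordinating to cut existing matches). *)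

theory Defs
  imports Complex_Main
begin

text \<open>Agents are of type 'a; the game is given by men M, women W (disjoint, finite)
  and the value function Pi, where Pi m w z is the value agent z receives from
  the formation of the match (m, w).\<close>

definition one_to_one :: "'a set \<Rightarrow> 'a set \<Rightarrow> ('a \<times> 'a) set \<Rightarrow> bool" where
  "one_to_one M W A \<longleftrightarrow> A \<subseteq> M \<times> W \<and>
     (\<forall>p\<in>A. \<forall>q\<in>A. (fst p = fst q \<longleftrightarrow> snd p = snd q))"

definition involves :: "'a \<Rightarrow> 'a \<times> 'a \<Rightarrow> bool" where
  "involves z p \<longleftrightarrow> fst p = z \<or> snd p = z"

definition util :: "('a \<Rightarrow> 'a \<Rightarrow> 'a \<Rightarrow> real) \<Rightarrow> 'a \<Rightarrow> ('a \<times> 'a) set \<Rightarrow> real" where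
  "util Pi z A = (\<Sum>p\<in>A. Pi (fst p) (snd p) z)"

text \<open>D is the set of matches involving members of coalition B after B deviates from A:
  B rearranges matches among its members and deletes matches of its members with
  outsiders (it may keep them, but cannot form new ones with outsiders); the result
  is one-to-one; every member performs at least one action (severs one of its
  matches or forms a new match with another member of B).\<close>
definition deviation :: "'a set \<Rightarrow> 'a set \<Rightarrow> ('a \<times> 'a) set \<Rightarrow> 'a set \<Rightarrow> ('a \<times> 'a) set \<Rightarrow> bool" where
  "deviation M W A B D \<longleftrightarrow>
     B \<noteq> {} \<and> B \<subseteq> M \<union> W \<and> one_to_one M W D \<and>
     (\<forall>p\<in>D. fst p \<in> B \<or> snd p \<in> B) \<and>
     (\<forall>p\<in>D. \<not> (fst p \<in> B \<and> snd p \<in> B) \<longrightarrow> p \<in> A) \<and>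
     (\<forall>i\<in>B. (\<exists>p\<in>A. involves i p \<and> p \<notin> D) \<or>
             (\<exists>p\<in>D. involves i p \<and> p \<notin> A \<and> fst p \<in> B \<and> snd p \<in> B))"

definition outsider_completions :: "'a set \<Rightarrow> 'a set \<Rightarrow> 'a set \<Rightarrow> ('a \<times> 'a) set \<Rightarrow> ('a \<times> 'a) set set" where
  "outsider_completions M W B D =
     {C. C \<subseteq> (M - B) \<times> (W - B) \<and> one_to_one M W (D \<union> C)}"

definition opt_value :: "'a set \<Rightarrow> 'a set \<Rightarrow> ('a \<Rightarrow> 'a \<Rightarrow> 'a \<Rightarrow> real) \<Rightarrow> 'a set \<Rightarrow>
    ('a \<times> 'a) set \<Rightarrow> 'a \<Rightarrow> real" where
  "opt_value M W Pi B D i = Max ((\<lambda>C. util Pi i (D \<union> C)) ` outsider_completions M W B D)"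

definition opt_blocking :: "'a set \<Rightarrow> 'a set \<Rightarrow> ('a \<Rightarrow> 'a \<Rightarrow> 'a \<Rightarrow> real) \<Rightarrow>
    ('a \<times> 'a) set \<Rightarrow> 'a set \<Rightarrow> bool" where
  "opt_blocking M W Pi A B \<longleftrightarrow>
     (\<exists>D. deviation M W A B D \<and> (\<forall>i\<in>B. opt_value M W Pi B D i > util Pi i A))"

definition weak_opt_stable_set :: "'a set \<Rightarrow> 'a set \<Rightarrow> ('a \<Rightarrow> 'a \<Rightarrow> 'a \<Rightarrow> real) \<Rightarrow>
    ('a \<times> 'a) set set" where
  "weak_opt_stable_set M W Pi = {A. one_to_one M W A \<and> (\<forall>B. \<not> opt_blocking M W Pi A B)}"

definition opt_pairwise_stable_set :: "'a set \<Rightarrow> 'a set \<Rightarrow> ('a \<Rightarrow> 'a \<Rightarrow> 'a \<Rightarrow> real) \<Rightarrow>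
    ('a \<times> 'a) set set" where
  "opt_pairwise_stable_set M W Pi =
     {A. one_to_one M W A \<and> (\<forall>B. card B \<le> 2 \<longrightarrow> \<not> opt_blocking M W Pi A B)}"

end

theory Submission
  imports Defs
begin

text \<open>Let coalition B block A with deviation D and pick i in B. If i is unmatched in D, the
  singleton {i} blocks by just severing its match in A; otherwise i's match p in D is a new
  pair inside B, and the pair of endpoints of p blocks by forming p alone. In both cases every
  outcome that B could optimistically hope for, namely D together with some organisation of
  the outsiders, is also available to the small coalition (with the rest of D now counted
  among the outsiders), so its optimistic values are at least as large.\<close>

lemma finite_outsider_completions:
  assumes "finite M" "finite W"
  shows "finite (outsider_completions M W B D)"
proof -
  have "outsider_completions M W B D \<subseteq> Pow (M \<times> W)"
    unfolding outsider_completions_def by auto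
  thus ?thesis using assms by (meson finite_Pow_iff finite_SigmaI finite_subset)
qed

lemma empty_in_outsider_completions:
  assumes "one_to_one M W D"
  shows "{} \<in> outsider_completions M W B D"
  using assms unfolding outsider_completions_def by auto

lemma opt_value_ge:
  assumes "finite M" "finite W" "C \<in> outsider_completions M W B D"
  shows "util Pi i (D \<union> C) \<le> opt_value M W Pi B D i"
  unfolding opt_value_def using assms finite_outsider_completions[OF assms(1,2)]
  by (intro Max_ge) auto

lemma opt_value_attained:
  assumes "finite M" "finite W" "one_to_one M W D"
  obtains C where "C \<in> outsider_completions M W B D" "opt_value M W Pi B D i = util Pi i (D \<union> C)"
proof -
  have "opt_value M W Pi B D i \<in> (\<lambda>C. util Pi i (D \<union> C)) ` outsider_completions M W B D"
    unfolding opt_value_def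
    using finite_outsider_completions[OF assms(1,2)] empty_in_outsider_completions[OF assms(3)]
    by (intro Max_in) auto
  thus ?thesis using that by auto
qed

lemma opt_value_le_if_outcomes_covered:
  assumes "finite M" "finite W" "one_to_one M W D"
    and "\<And>C. C \<in> outsider_completions M W B D \<Longrightarrow>
           \<exists>C'\<in>outsider_completions M W B' D'. D \<union> C = D' \<union> C'"
  shows "opt_value M W Pi B D i \<le> opt_value M W Pi B' D' i"
proof -
  obtain C where C: "C \<in> outsider_completions M W B D"
    and opt: "opt_value M W Pi B D i = util Pi i (D \<union> C)"
    using opt_value_attained[OF assms(1-3)] .
  then obtain C' where C': "C' \<in> outsider_completions M W B' D'" and eq: "D \<union> C = D' \<union> C'"
    using assms(4) by blast
  have "util Pi i (D' \<union> C') \<le> opt_value M W Pi B' D' i"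
    using opt_value_ge[OF assms(1,2) C'] .
  thus ?thesis unfolding opt eq .
qed

lemma opt_blocking_by_subcoalition:
  assumes "finite M" "finite W" "deviation M W A B D"
    and improves: "\<And>i. i \<in> B \<Longrightarrow> opt_value M W Pi B D i > util Pi i A"
    and "B' \<subseteq> B" "deviation M W A B' D'"
    and "\<And>C. C \<in> outsider_completions M W B D \<Longrightarrow>
           \<exists>C'\<in>outsider_completions M W B' D'. D \<union> C = D' \<union> C'"
  shows "opt_blocking M W Pi A B'"
proof -
  have "one_to_one M W D" using assms(3) unfolding deviation_def by simp
  hence "opt_value M W Pi B D i \<le> opt_value M W Pi B' D' i" for i
    by (rule opt_value_le_if_outcomes_covered[OF assms(1,2) _ assms(7)])
  moreover have "i \<in> B" if "i \<in> B'" for i using that assms(5) by blast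
  ultimately have "\<forall>i\<in>B'. opt_value M W Pi B' D' i > util Pi i A"
    using improves by (meson less_le_trans)
  thus ?thesis unfolding opt_blocking_def using assms(6) by blast
qed

lemma one_to_one_fst_eq_iff_snd_eq:
  assumes "one_to_one M W A" "(a, b) \<in> A" "(c, d) \<in> A"
  shows "a = c \<longleftrightarrow> b = d"
  using assms unfolding one_to_one_def by fastforce

lemma one_to_one_involves_unique:
  assumes "one_to_one M W A" "M \<inter> W = {}" "p \<in> A" "q \<in> A" "involves i p" "involves i q"
  shows "p = q"
proof -
  obtain a b c d where pq: "p = (a, b)" "q = (c, d)" by fastforce
  have "a \<in> M" "b \<in> W" "c \<in> M" "d \<in> W"
    using assms(1,3,4) pq unfolding one_to_one_def by auto
  hence "a = c \<or> b = d" using assms(2,5,6) pq unfolding involves_def by auto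
  thus ?thesis using one_to_one_fst_eq_iff_snd_eq[OF assms(1)] assms(3,4) pq by blast
qed

lemma opt_blocking_singleton:
  assumes "finite M" "finite W" "deviation M W A B D"
    and "\<And>i. i \<in> B \<Longrightarrow> opt_value M W Pi B D i > util Pi i A"
    and "i \<in> B" "\<forall>p\<in>D. \<not> involves i p"
  shows "opt_blocking M W Pi A {i}"
proof (rule opt_blocking_by_subcoalition[OF assms(1-4)])
  show "{i} \<subseteq> B" using assms(5) by simp
  obtain p where "p \<in> A" "involves i p"
    using assms(3,5,6) unfolding deviation_def by blast
  thus "deviation M W A {i} {}"
    using assms(3,5) unfolding deviation_def one_to_one_def by auto
  fix C assume "C \<in> outsider_completions M W B D"
  hence C: "C \<subseteq> (M - B) \<times> (W - B)" "one_to_one M W (D \<union> C)"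
    unfolding outsider_completions_def by auto
  have "D \<subseteq> M \<times> W" using C(2) unfolding one_to_one_def by auto
  hence "D \<subseteq> (M - {i}) \<times> (W - {i})" using assms(6) unfolding involves_def by auto
  hence "D \<union> C \<in> outsider_completions M W {i} {}"
    using C assms(5) unfolding outsider_completions_def by auto
  thus "\<exists>C'\<in>outsider_completions M W {i} {}. D \<union> C = {} \<union> C'" by (metis sup_bot_left)
qed

lemma new_match_of_deviation:
  assumes "M \<inter> W = {}" "one_to_one M W A" "deviation M W A B D"
    and "i \<in> B" "p \<in> D" "involves i p"
  shows "p \<notin> A" "fst p \<in> B" "snd p \<in> B"
proof -
  have oD: "one_to_one M W D" using assms(3) unfolding deviation_def by simp
  show pA: "p \<notin> A"
  proof
    assume "p \<in> A"
    have "(\<exists>q\<in>A. involves i q \<and> q \<notin> D) \<or>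
          (\<exists>q\<in>D. involves i q \<and> q \<notin> A \<and> fst q \<in> B \<and> snd q \<in> B)"
      using assms(3,4) unfolding deviation_def by blast
    thus False
      using one_to_one_involves_unique[OF assms(2,1)] one_to_one_involves_unique[OF oD assms(1)]
        \<open>p \<in> A\<close> assms(5,6) by metis
  qed
  thus "fst p \<in> B" "snd p \<in> B" using assms(3,5) unfolding deviation_def by auto
qed

lemma opt_blocking_pair:
  assumes "finite M" "finite W" "M \<inter> W = {}" "one_to_one M W A" "deviation M W A B D"
    and "\<And>i. i \<in> B \<Longrightarrow> opt_value M W Pi B D i > util Pi i A"
    and "i \<in> B" "(m, w) \<in> D" "involves i (m, w)"
  shows "opt_blocking M W Pi A {m, w}"
proof (rule opt_blocking_by_subcoalition[OF assms(1,2,5,6)])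
  have new: "(m, w) \<notin> A" "m \<in> B" "w \<in> B"
    using new_match_of_deviation[OF assms(3,4,5,7,8,9)] by simp_all
  have oD: "one_to_one M W D" using assms(5) unfolding deviation_def by simp
  hence mw: "m \<in> M" "w \<in> W" using assms(8) unfolding one_to_one_def by auto
  show "{m, w} \<subseteq> B" using new by simp
  show "deviation M W A {m, w} {(m, w)}"
    using mw new unfolding deviation_def one_to_one_def involves_def by auto
  have rest: "D - {(m, w)} \<subseteq> (M - {m, w}) \<times> (W - {m, w})"
  proof
    fix q assume "q \<in> D - {(m, w)}"
    then obtain a b where q: "q = (a, b)" "(a, b) \<in> D" "(a, b) \<noteq> (m, w)" by (cases q) auto
    hence "a \<in> M" "b \<in> W" using oD unfolding one_to_one_def by auto
    moreover have "a \<noteq> m" "b \<noteq> w"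
      using one_to_one_fst_eq_iff_snd_eq[OF oD q(2) assms(8)] q(3) by auto
    ultimately show "q \<in> (M - {m, w}) \<times> (W - {m, w})" using q(1) mw assms(3) by auto
  qed
  fix C assume "C \<in> outsider_completions M W B D"
  hence C: "C \<subseteq> (M - B) \<times> (W - B)" "one_to_one M W (D \<union> C)"
    unfolding outsider_completions_def by auto
  have eq: "{(m, w)} \<union> ((D - {(m, w)}) \<union> C) = D \<union> C" using assms(8) by auto
  have "C \<subseteq> (M - {m, w}) \<times> (W - {m, w})" using C(1) new by auto
  hence "(D - {(m, w)}) \<union> C \<in> outsider_completions M W {m, w} {(m, w)}"
    using rest C(2) unfolding outsider_completions_def mem_Collect_eq eq by blast
  with eq show "\<exists>C'\<in>outsider_completions M W {m, w} {(m, w)}. D \<union> C = {(m, w)} \<union> C'"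
    by auto
qed

lemma opt_blocking_imp_small_opt_blocking:
  assumes "finite M" "finite W" "M \<inter> W = {}" "one_to_one M W A" "opt_blocking M W Pi A B"
  shows "\<exists>B'. card B' \<le> 2 \<and> opt_blocking M W Pi A B'"
proof -
  obtain D where dev: "deviation M W A B D"
    and improves: "\<And>i. i \<in> B \<Longrightarrow> opt_value M W Pi B D i > util Pi i A"
    using assms(5) unfolding opt_blocking_def by auto
  obtain i where i: "i \<in> B" using dev unfolding deviation_def by auto
  show ?thesis
  proof (cases "\<exists>p\<in>D. involves i p")
    case False
    hence "opt_blocking M W Pi A {i}"
      using opt_blocking_singleton[OF assms(1,2) dev improves i] by blast
    thus ?thesis by (intro exI[of _ "{i}"]) simp
  next
    case True
    then obtain m w where "(m, w) \<in> D" "involves i (m, w)" by auto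
    moreover have "card {m, w} \<le> 2" by (simp add: card_insert_le_m1)
    ultimately show ?thesis using opt_blocking_pair[OF assms(1-4) dev improves i] by auto
  qed
qed

theorem theorem14:
  fixes M W :: "'a set" and Pi :: "'a \<Rightarrow> 'a \<Rightarrow> 'a \<Rightarrow> real"
  assumes "finite M" and "finite W" and "M \<inter> W = {}"
  shows "opt_pairwise_stable_set M W Pi = weak_opt_stable_set M W Pi"
  unfolding opt_pairwise_stable_set_def weak_opt_stable_set_def
  using opt_blocking_imp_small_opt_blocking[OF assms] by blast

end
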